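(* Let $n\geqslant2$ be even. Then either $R[n/2]$ has maximal size among all rainbows on $\{0,\dots,n\}$, or both $R[0]$ and $R[n]$ have maximal size among all rainbows on $\{0,\dots,n\}$.
   Context: An arc is a pair $\underline{x}\to\underline{y}$ of integers $0\leqslant x<y\leqslant n$, with weight $\binom{n}{x,\,y-x,\,n-y}=\frac{n!}{x!(y-x)!(n-y)!}$. A rainbow on $\{0,\dots,n\}$ is a set of arcs $\{\underline{x_i}\to\underline{y_i}\}_{0\leqslant i\leqslant m}$ with $x_0<x_1<\dots<x_m<y_m<\dots<y_0$; its size is the sum of the weights of its arcs. For $n$ even and $0\leqslant x\leqslant n$, $R[x]$ denotes the unique rainbow with $\frac n2$ arcs whose set of endpoints is $\{0,\dots,n\}\setminus\{x\}$. *)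

theory Defs
  imports Main
begin

definition arc_weight :: "nat \<Rightarrow> nat \<times> nat \<Rightarrow> nat" where
  "arc_weight n a = fact n div (fact (fst a) * fact (snd a - fst a) * fact (n - snd a))"

definition is_rainbow :: "nat \<Rightarrow> (nat \<times> nat) set \<Rightarrow> bool" where
  "is_rainbow n A \<longleftrightarrow> finite A \<and> A \<noteq> {} \<and>
     (\<forall>(x,y)\<in>A. x < y \<and> y \<le> n) \<and>
     (\<forall>(a,b)\<in>A. \<forall>(c,d)\<in>A. (a,b) \<noteq> (c,d) \<longrightarrow>
        (a < c \<and> d < b) \<or> (c < a \<and> b < d))"

definition rainbow_size :: "nat \<Rightarrow> (nat \<times> nat) set \<Rightarrow> nat" where
  "rainbow_size n A = (\<Sum>a\<in>A. arc_weight n a)"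

text \<open>R[x] (n even): the rainbow with n/2 arcs whose endpoint set is {0..n} - {x}.
 With e the increasing enumeration of {0..n} - {x} (length n), the arcs are
 e!i -> e!(n-1-i) for i < n/2.\<close>

definition R :: "nat \<Rightarrow> nat \<Rightarrow> (nat \<times> nat) set" where
  "R n x = (let e = filter (\<lambda>k. k \<noteq> x) [0..<Suc n] in
            {(e ! i, e ! (n - 1 - i)) | i. i < n div 2})"

definition max_size_rainbow :: "nat \<Rightarrow> (nat \<times> nat) set \<Rightarrow> bool" where
  "max_size_rainbow n A \<longleftrightarrow> is_rainbow n A \<and>
     (\<forall>B. is_rainbow n B \<longrightarrow> rainbow_size n B \<le> rainbow_size n A)"

end

theory Submission
  imports Defs "HOL.Binomial_Plus"
begin

text \<open>
  An arc \<open>x \<rightarrow> y\<close> has weight \<open>(n choose s) * (s choose x)\<close>, where \<open>s = x + (n - y)\<close> is the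
  number of points outside it (choose the outer points, then those left of the arc), so its
  weight is at most \<open>h s = (n choose s) * (s choose (s div 2))\<close>.  In a rainbow the values of
  \<open>s\<close> of distinct arcs differ by at least 2 and lie below \<open>n\<close>.  Since \<open>h\<close> is unimodal, the sum
  of \<open>h\<close> over a subset of \<open>{..<n}\<close> without two consecutive elements is at most the sum of \<open>h\<close>
  over all even or over all odd numbers below \<open>n\<close>: shift every element of the wrong parity
  one step towards the maximum.  The rainbow \<open>R[n/2]\<close> realises all even \<open>s\<close> with weight
  exactly \<open>h s\<close>, and \<open>R[0]\<close> and \<open>R[n]\<close> realise all odd \<open>s\<close> in the same way.
\<close>

lemma arc_weight_eq_binomial:
  assumes "x < y" "y \<le> n"
  shows "arc_weight n (x, y) = (n choose (x + (n - y))) * ((x + (n - y)) choose x)"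
proof -
  define s where "s = x + (n - y)"
  have outer: "fact s * fact (n - s) * (n choose s) = (fact n :: nat)"
    using binomial_fact_lemma[of s n] assms unfolding s_def by simp
  have left: "fact x * fact (s - x) * (s choose x) = (fact s :: nat)"
    using binomial_fact_lemma[of x s] unfolding s_def by simp
  have "n - s = y - x" "s - x = n - y"
    using assms unfolding s_def by auto
  with outer left have "(fact n :: nat) =
      ((n choose s) * (s choose x)) * (fact x * fact (y - x) * fact (n - y))"
    by (metis mult.commute mult.left_commute)
  then show ?thesis
    unfolding arc_weight_def s_def[symmetric] by (simp add: fact_nonzero)
qed

definition central_weight :: "nat \<Rightarrow> nat \<Rightarrow> nat" where
  "central_weight n s = (n choose s) * (s choose (s div 2))"

lemma arc_weight_le_central_weight:
  assumes "x < y" "y \<le> n"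
  shows "arc_weight n (x, y) \<le> central_weight n (x + (n - y))"
  unfolding arc_weight_eq_binomial[OF assms] central_weight_def
  by (intro mult_le_mono2 binomial_maximum)

lemma arc_weight_eq_central_weight:
  assumes "x < y" "y \<le> n" "x \<le> Suc (n - y)" "n - y \<le> Suc x"
  shows "arc_weight n (x, y) = central_weight n (x + (n - y))"
proof -
  define s where "s = x + (n - y)"
  have "x = s div 2 \<or> (odd s \<and> x = Suc (s div 2))"
    using assms(3,4) unfolding s_def by presburger
  then have "s choose x = s choose (s div 2)"
    by (auto simp: central_binomial_odd)
  then show ?thesis
    unfolding arc_weight_eq_binomial[OF assms(1,2)] central_weight_def s_def by simp
qed

subsection \<open>Unimodality of the central weight\<close>

lemma binomial_Suc_times: "(n choose Suc s) * Suc s = (n choose s) * (n - s)"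
proof (cases n)
  case (Suc m)
  have "(n choose Suc s) * Suc s = Suc m * (m choose s)"
    using Suc_times_binomial[of s m] Suc by (simp add: mult.commute)
  also have "\<dots> = (n choose s) * (n - s)"
    using binomial_absorb_comp[of n s] Suc by (simp add: mult.commute)
  finally show ?thesis .
qed simp

lemma central_binomial_Suc: "Suc s choose (Suc s div 2) = Suc s choose Suc (s div 2)"
proof (cases "even s")
  case True
  then have "Suc s div 2 = s div 2" "Suc s - s div 2 = Suc (s div 2)"
    by presburger+
  then show ?thesis
    using binomial_symmetric[of "s div 2" "Suc s"] by simp
next
  case False
  then have "Suc s div 2 = Suc (s div 2)"
    by presburger
  then show ?thesis by simp
qed

lemma central_weight_Suc:
  "central_weight n (Suc s) * (s div 2 + 1) = central_weight n s * (n - s)"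
proof -
  have "central_weight n (Suc s) * (s div 2 + 1)
      = (n choose Suc s) * ((Suc s choose Suc (s div 2)) * Suc (s div 2))"
    unfolding central_weight_def central_binomial_Suc by (simp only: mult.assoc Suc_eq_plus1)
  also have "\<dots> = ((n choose Suc s) * Suc s) * (s choose (s div 2))"
    unfolding Suc_times_binomial_eq[symmetric] by (simp only: ac_simps)
  finally show ?thesis
    unfolding binomial_Suc_times central_weight_def by simp
qed

lemma central_weight_increasing_step:
  assumes "s div 2 + 1 + s \<le> n"
  shows "central_weight n s \<le> central_weight n (Suc s)"
proof -
  have "central_weight n s * (s div 2 + 1) \<le> central_weight n s * (n - s)"
    using assms by (intro mult_le_mono2) simp
  then show ?thesis
    unfolding central_weight_Suc[symmetric] by (simp only: mult_le_cancel2)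
qed

lemma central_weight_decreasing_step:
  assumes "n < s div 2 + 1 + s"
  shows "central_weight n (Suc s) \<le> central_weight n s"
proof -
  have "central_weight n s * (n - s) \<le> central_weight n s * (s div 2 + 1)"
    using assms by (intro mult_le_mono2) simp
  then show ?thesis
    unfolding central_weight_Suc[symmetric] by (simp only: mult_le_cancel2)
qed

lemma central_weight_unimodal:
  obtains M where "M \<le> n"
    and "\<And>s. s < M \<Longrightarrow> central_weight n s \<le> central_weight n (Suc s)"
    and "\<And>s. M \<le> s \<Longrightarrow> central_weight n (Suc s) \<le> central_weight n s"
proof
  define M where "M = (LEAST s. n < s div 2 + 1 + s)"
  have "n < n div 2 + 1 + n" by simp
  then show "M \<le> n"
    unfolding M_def by (rule Least_le)
  show "central_weight n s \<le> central_weight n (Suc s)" if "s < M" for s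
    using not_less_Least[of s "\<lambda>s. n < s div 2 + 1 + s"] that
    by (intro central_weight_increasing_step) (simp add: M_def)
  have "n < M div 2 + 1 + M"
    unfolding M_def by (rule LeastI[of _ n]) simp
  then show "central_weight n (Suc s) \<le> central_weight n s" if "M \<le> s" for s
    using that div_le_mono[OF that, of 2]
    by (intro central_weight_decreasing_step) linarith
qed

subsection \<open>Sums of a unimodal function over sets without consecutive elements\<close>

lemma sum_no_consecutive_le_max_parity:
  fixes h :: "nat \<Rightarrow> 'a :: {canonically_ordered_monoid_add, linorder}"
  assumes S: "S \<subseteq> {..<n}" and no_consecutive: "\<And>s. s \<in> S \<Longrightarrow> Suc s \<notin> S"
    and "M \<le> n"
    and increasing: "\<And>s. s < M \<Longrightarrow> h s \<le> h (Suc s)"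
    and decreasing: "\<And>s. M \<le> s \<Longrightarrow> h (Suc s) \<le> h s"
  shows "sum h S \<le> max (sum h {t. t < n \<and> even t}) (sum h {t. t < n \<and> odd t})"
proof -
  \<comment> \<open>Target the parity of the turning point \<open>M\<close> if \<open>M \<in> S\<close>, the other one otherwise: then
    no element of \<open>S\<close> of the wrong parity is \<open>M\<close> or just below it, so shifting it one
    step towards \<open>M\<close> neither decreases \<open>h\<close> nor collides with another element of \<open>S\<close>.\<close>
  define b where "b = (if M \<in> S then even M else odd M)"
  define T where "T = {t. t < n \<and> even t = b}"
  define shift where "shift s = (if even s = b then s else if s < M then Suc s else s - 1)" for s
  have not_mode: "s \<noteq> M" "Suc s \<noteq> M" if "s \<in> S" "even s \<noteq> b" for s
    using that no_consecutive unfolding b_def by (auto split: if_splits)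
  have shift_ge: "h s \<le> h (shift s)" if "s \<in> S" for s
  proof -
    have "h s \<le> h (s - 1)" if "M < s"
      using decreasing[of "s - 1"] that by simp
    then show ?thesis
      using increasing[of s] not_mode[OF that] unfolding shift_def by auto
  qed
  have "inj_on shift S"
  proof (rule inj_onI, rule ccontr)
    fix s s' assume "s \<in> S" "s' \<in> S" "shift s = shift s'" "s \<noteq> s'"
    moreover have "Suc s \<noteq> s'" "Suc s' \<noteq> s"
      using no_consecutive \<open>s \<in> S\<close> \<open>s' \<in> S\<close> by auto
    ultimately show False
      using not_mode[of s] not_mode[of s'] unfolding shift_def by (auto split: if_splits)
  qed
  have shift_into: "shift ` S \<subseteq> T"
  proof
    fix t assume "t \<in> shift ` S"
    then obtain s where s: "s \<in> S" "t = shift s" by blast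
    have "Suc s \<noteq> n" if "even s \<noteq> b" "s < M"
      using that \<open>M \<le> n\<close> S unfolding b_def by (auto split: if_splits) presburger+
    then show "t \<in> T"
      using s S not_mode[of s] unfolding T_def shift_def by (auto split: if_splits)
  qed
  have "sum h S \<le> sum (h \<circ> shift) S"
    using shift_ge by (intro sum_mono) simp
  also have "\<dots> = sum h (shift ` S)"
    using \<open>inj_on shift S\<close> by (simp add: sum.reindex)
  also have "\<dots> \<le> sum h T"
    using shift_into by (intro sum_mono2) (simp_all add: T_def)
  finally show ?thesis
    unfolding T_def by (cases b) (auto simp: le_max_iff_disj)
qed

lemma sum_evens_below:
  fixes f :: "nat \<Rightarrow> 'a :: comm_monoid_add"
  assumes "even n"
  shows "sum f {t. t < n \<and> even t} = (\<Sum>i<n div 2. f (2 * i))"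
proof -
  have "{t. t < n \<and> even t} = (\<lambda>i. 2 * i) ` {..<n div 2}"
    using assms by (auto simp: image_def elim!: evenE)
  then show ?thesis
    by (simp add: sum.reindex inj_on_def)
qed

lemma sum_odds_below:
  fixes f :: "nat \<Rightarrow> 'a :: comm_monoid_add"
  assumes "even n"
  shows "sum f {t. t < n \<and> odd t} = (\<Sum>i<n div 2. f (2 * i + 1))"
proof -
  have "{t. t < n \<and> odd t} = (\<lambda>i. 2 * i + 1) ` {..<n div 2}"
    using assms by (auto simp: image_def elim!: evenE oddE) presburger
  then show ?thesis
    by (simp add: sum.reindex inj_on_def)
qed

subsection \<open>An upper bound on the size of rainbows\<close>

definition arc_outer :: "nat \<Rightarrow> nat \<times> nat \<Rightarrow> nat" where
  "arc_outer n a = fst a + (n - snd a)"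

lemma rainbow_arc_outer_gap:
  assumes "is_rainbow n A" "p \<in> A" "q \<in> A" "p \<noteq> q"
  shows "arc_outer n p + 2 \<le> arc_outer n q \<or> arc_outer n q + 2 \<le> arc_outer n p"
proof -
  obtain a b c d where pq: "p = (a, b)" "q = (c, d)"
    by (cases p, cases q)
  have "b \<le> n" "d \<le> n" "(a < c \<and> d < b) \<or> (c < a \<and> b < d)"
    using assms unfolding is_rainbow_def pq by blast+
  then show ?thesis
    unfolding pq arc_outer_def by auto
qed

lemma rainbow_size_le_max_parity:
  assumes "is_rainbow n A"
  shows "rainbow_size n A \<le> max (sum (central_weight n) {t. t < n \<and> even t})
                                (sum (central_weight n) {t. t < n \<and> odd t})"
proof -
  have arcs: "x < y \<and> y \<le> n" if "(x, y) \<in> A" for x y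
    using assms that unfolding is_rainbow_def by blast
  have gap: "arc_outer n p + 2 \<le> arc_outer n q \<or> arc_outer n q + 2 \<le> arc_outer n p"
    if "p \<in> A" "q \<in> A" "p \<noteq> q" for p q
    using rainbow_arc_outer_gap[OF assms that] .
  have inj: "inj_on (arc_outer n) A"
    by (rule inj_onI) (use gap in fastforce)
  have below_n: "arc_outer n ` A \<subseteq> {..<n}"
    using arcs unfolding arc_outer_def by fastforce
  have no_consecutive: "Suc s \<notin> arc_outer n ` A" if "s \<in> arc_outer n ` A" for s
    using that gap by fastforce
  obtain M where unimodal: "M \<le> n"
    "\<And>s. s < M \<Longrightarrow> central_weight n s \<le> central_weight n (Suc s)"
    "\<And>s. M \<le> s \<Longrightarrow> central_weight n (Suc s) \<le> central_weight n s"
    using central_weight_unimodal[of n] by blast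
  have "rainbow_size n A \<le> sum (central_weight n \<circ> arc_outer n) A"
    unfolding rainbow_size_def
    using arcs arc_weight_le_central_weight unfolding arc_outer_def
    by (intro sum_mono) auto
  also have "\<dots> = sum (central_weight n) (arc_outer n ` A)"
    using inj by (simp add: sum.reindex)
  also have "\<dots> \<le> max (sum (central_weight n) {t. t < n \<and> even t})
                       (sum (central_weight n) {t. t < n \<and> odd t})"
    by (rule sum_no_consecutive_le_max_parity[OF below_n no_consecutive unimodal(1)])
      (use unimodal in auto)
  finally show ?thesis .
qed

subsection \<open>The rainbows \<open>R[x]\<close>\<close>

definition skip :: "nat \<Rightarrow> nat \<Rightarrow> nat" where
  "skip x i = (if i < x then i else Suc i)"

lemma strict_mono_skip: "strict_mono (skip x)"
  by (rule strict_monoI) (simp add: skip_def)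

lemma filter_upt_neq:
  "x \<le> n \<Longrightarrow> filter (\<lambda>k. k \<noteq> x) [0..<Suc n] = [0..<x] @ [Suc x..<Suc n]"
proof (induction n)
  case (Suc n)
  then show ?case
    by (cases "x = Suc n") (auto simp: filter_id_conv)
qed simp

lemma nth_filter_upt_neq:
  assumes "x \<le> n" "i < n"
  shows "filter (\<lambda>k. k \<noteq> x) [0..<Suc n] ! i = skip x i"
  using assms unfolding filter_upt_neq[OF assms(1)] skip_def by (simp add: nth_append) arith

lemma R_eq_image:
  assumes "x \<le> n"
  shows "R n x = (\<lambda>i. (skip x i, skip x (n - 1 - i))) ` {..<n div 2}"
proof -
  define e where "e = filter (\<lambda>k. k \<noteq> x) [0..<Suc n]"
  have "R n x = (\<lambda>i. (e ! i, e ! (n - 1 - i))) ` {..<n div 2}"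
    unfolding R_def Let_def e_def by blast
  also have "\<dots> = (\<lambda>i. (skip x i, skip x (n - 1 - i))) ` {..<n div 2}"
  proof (rule image_cong[OF refl])
    fix i assume "i \<in> {..<n div 2}"
    then have "i < n" "n - 1 - i < n" by auto
    then show "(e ! i, e ! (n - 1 - i)) = (skip x i, skip x (n - 1 - i))"
      unfolding e_def using nth_filter_upt_neq[OF assms] by simp
  qed
  finally show ?thesis .
qed

lemma is_rainbow_image:
  fixes m :: nat
  assumes "0 < m" "\<And>i. i < m \<Longrightarrow> u i < v i \<and> v i \<le> n"
    and "strict_mono_on {..<m} u" "strict_antimono_on {..<m} v"
  shows "is_rainbow n ((\<lambda>i. (u i, v i)) ` {..<m})"
proof -
  have "u i < u j \<and> v j < v i" if "i < j" "j < m" for i j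
    using monotone_onD[OF assms(3)] monotone_onD[OF assms(4)] that by simp
  then have "(u i < u j \<and> v j < v i) \<or> (u j < u i \<and> v i < v j)"
    if "i < m" "j < m" "i \<noteq> j" for i j
    using that by (metis linorder_neqE_nat)
  then show ?thesis
    using assms(1,2) unfolding is_rainbow_def by fastforce
qed

lemma is_rainbow_R:
  assumes "2 \<le> n" "x \<le> n"
  shows "is_rainbow n (R n x)"
  unfolding R_eq_image[OF assms(2)]
proof (rule is_rainbow_image)
  show "0 < n div 2" using assms(1) by simp
  show "skip x i < skip x (n - 1 - i) \<and> skip x (n - 1 - i) \<le> n" if "i < n div 2" for i
    using that strict_monoD[OF strict_mono_skip, of i "n - 1 - i" x] by (auto simp: skip_def)
  show "strict_mono_on {..<n div 2} (skip x)"
    using strict_mono_skip by (simp add: monotone_on_def strict_mono_def)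
  show "strict_antimono_on {..<n div 2} (\<lambda>i. skip x (n - 1 - i))"
    using strict_mono_skip[of x] by (auto simp: monotone_on_def strict_mono_def)
qed

lemma rainbow_size_image:
  assumes "inj_on u I"
  shows "rainbow_size n ((\<lambda>i. (u i, v i)) ` I) = (\<Sum>i\<in>I. arc_weight n (u i, v i))"
proof -
  have "inj_on (\<lambda>i. (u i, v i)) I"
    using assms by (auto simp: inj_on_def)
  then show ?thesis
    unfolding rainbow_size_def by (simp add: sum.reindex)
qed

lemma rainbow_size_R:
  assumes "x \<le> n"
  shows "rainbow_size n (R n x) = (\<Sum>i<n div 2. arc_weight n (skip x i, skip x (n - 1 - i)))"
  unfolding R_eq_image[OF assms]
  by (rule rainbow_size_image) (simp add: strict_mono_imp_inj_on strict_mono_skip)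

lemma rainbow_size_R_middle:
  assumes "even n"
  shows "rainbow_size n (R n (n div 2)) = sum (central_weight n) {t. t < n \<and> even t}"
  unfolding rainbow_size_R[OF div_le_dividend] sum_evens_below[OF assms]
proof (rule sum.cong[OF refl])
  fix i assume "i \<in> {..<n div 2}"
  then have "skip (n div 2) i = i" "skip (n div 2) (n - 1 - i) = n - i" "i < n - i"
    by (auto simp: skip_def)
  then show "arc_weight n (skip (n div 2) i, skip (n div 2) (n - 1 - i)) = central_weight n (2 * i)"
    using arc_weight_eq_central_weight[of i "n - i" n] by (simp add: mult_2)
qed

lemma rainbow_size_R_0:
  assumes "even n"
  shows "rainbow_size n (R n 0) = sum (central_weight n) {t. t < n \<and> odd t}"
  unfolding rainbow_size_R[OF le0] sum_odds_below[OF assms]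
proof (rule sum.cong[OF refl])
  fix i assume "i \<in> {..<n div 2}"
  then have "skip 0 i = Suc i" "skip 0 (n - 1 - i) = n - i" "Suc i < n - i"
    by (auto simp: skip_def)
  then show "arc_weight n (skip 0 i, skip 0 (n - 1 - i)) = central_weight n (2 * i + 1)"
    using arc_weight_eq_central_weight[of "Suc i" "n - i" n] by (simp add: mult_2)
qed

lemma rainbow_size_R_n:
  assumes "even n"
  shows "rainbow_size n (R n n) = sum (central_weight n) {t. t < n \<and> odd t}"
  unfolding rainbow_size_R[OF le_refl] sum_odds_below[OF assms]
proof (rule sum.cong[OF refl])
  fix i assume "i \<in> {..<n div 2}"
  then have "skip n i = i" "skip n (n - 1 - i) = n - 1 - i" "i < n - 1 - i"
    by (auto simp: skip_def)
  then show "arc_weight n (skip n i, skip n (n - 1 - i)) = central_weight n (2 * i + 1)"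
    using arc_weight_eq_central_weight[of i "n - 1 - i" n] by (simp add: mult_2)
qed

theorem lemma5p13:
  fixes n :: nat
  assumes "even n" and "n \<ge> 2"
  shows "max_size_rainbow n (R n (n div 2)) \<or>
         (max_size_rainbow n (R n 0) \<and> max_size_rainbow n (R n n))"
proof -
  define Ev where "Ev = sum (central_weight n) {t. t < n \<and> even t}"
  define Od where "Od = sum (central_weight n) {t. t < n \<and> odd t}"
  have bound: "rainbow_size n B \<le> max Ev Od" if "is_rainbow n B" for B
    using rainbow_size_le_max_parity[OF that] unfolding Ev_def Od_def .
  have rainbows: "is_rainbow n (R n (n div 2))" "is_rainbow n (R n 0)" "is_rainbow n (R n n)"
    using is_rainbow_R[OF assms(2)] by simp_all
  have sizes: "rainbow_size n (R n (n div 2)) = Ev"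
    "rainbow_size n (R n 0) = Od" "rainbow_size n (R n n) = Od"
    unfolding Ev_def Od_def
    by (rule rainbow_size_R_middle rainbow_size_R_0 rainbow_size_R_n, fact)+
  show ?thesis
    using bound rainbows sizes unfolding max_size_rainbow_def max_def
    by (cases "Od \<le> Ev") auto
qed

end
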